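(* Let $m\in\mathbb{Z}$, $\sigma\in\mathbb{R}$, $\mathbf{k}=(k_1,\dots,k_n)\in\mathbb{N}^n$ and $\mathbf{l}=(l_1,\dots,l_n)\in(\mathbb{Z}_{\ge0})^n$ with $k_u-1-l_u\ge0$ for all $u$. Then \[\mathrm{Ls}_{\mathbf{k}}^{\mathbf{l}}(2m\pi;2m\pi+\sigma)=\sum_{\mathbf{j}\le\mathbf{l}}(2m\pi)^{|\mathbf{j}|}\binom{\mathbf{l}}{\mathbf{j}}\mathrm{Ls}_{\mathbf{k}-\mathbf{j}}^{\mathbf{l}-\mathbf{j}}(\sigma),\] the sum over all $\mathbf{j}=(j_1,\dots,j_n)\in(\mathbb{Z}_{\ge0})^n$ with $j_u\le l_u$ for all $u$, where $\binom{\mathbf{l}}{\mathbf{j}}=\prod_{u}\binom{l_u}{j_u}$.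
   Context: $|\mathbf{j}|=j_1+\dots+j_n$; tuples are subtracted componentwise; $0^0=1$. With $A(\theta)=\log|2\sin(\theta/2)|$: $\mathrm{Ls}_{\mathbf{k}}^{\mathbf{l}}(\sigma)=(-1)^n\int_0^{\sigma}\int_0^{\theta_n}\cdots\int_0^{\theta_2}\prod_{u=1}^n\theta_u^{l_u}A(\theta_u)^{k_u-1-l_u}\,d\theta_1\cdots d\theta_n$ and $\mathrm{Ls}_{\mathbf{k}}^{\mathbf{l}}(\rho;\sigma)=(-1)^n\int_\rho^{\sigma}\int_\rho^{\theta_n}\cdots\int_\rho^{\theta_2}\prod_{u=1}^n\theta_u^{l_u}A(\theta_u)^{k_u-1-l_u}\,d\theta_1\cdots d\theta_n$ (iterated oriented integrals). *)

theory Defs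
  imports "HOL-Analysis.Analysis"
begin

definition A_fun :: "real \<Rightarrow> real" where
  "A_fun \<theta> = ln \<bar>2 * sin (\<theta> / 2)\<bar>"

definition oint :: "real \<Rightarrow> real \<Rightarrow> (real \<Rightarrow> real) \<Rightarrow> real" where
  "oint a b f = (if a \<le> b then integral {a..b} f else - integral {b..a} f)"

text \<open>Iterated integral; the list is ordered from the outermost variable
  (theta_n) to the innermost (theta_1); each entry is (k_u, l_u).\<close>
fun Ls_iter :: "real \<Rightarrow> (nat \<times> nat) list \<Rightarrow> real \<Rightarrow> real" where
  "Ls_iter \<rho> [] t = 1"
| "Ls_iter \<rho> ((k, l) # ps) t =
     oint \<rho> t (\<lambda>\<theta>. \<theta> ^ l * A_fun \<theta> ^ (k - 1 - l) * Ls_iter \<rho> ps \<theta>)"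

definition Ls2 :: "nat list \<Rightarrow> nat list \<Rightarrow> real \<Rightarrow> real \<Rightarrow> real" where
  "Ls2 ks ls \<rho> \<sigma> = (-1) ^ length ks * Ls_iter \<rho> (rev (zip ks ls)) \<sigma>"

definition Ls1 :: "nat list \<Rightarrow> nat list \<Rightarrow> real \<Rightarrow> real" where
  "Ls1 ks ls \<sigma> = Ls2 ks ls 0 \<sigma>"

end

theory Submission
  imports Defs
begin

(* Substituting theta = 2 m pi + phi in each of the nested integrals leaves A unchanged, as A is
   2 pi-periodic, and turns each weight theta^l into (2 m pi + phi)^l, which expands binomially.
   Multiplying out and integrating term by term, from the innermost integral outwards, produces
   the sum over j.  Term-by-term integration is legitimate because A has only logarithmic
   singularities, at the points of 2 pi Z, where |A theta|^p = O(|theta - 2 pi i|^(-1/2)); hence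
   A^p is absolutely integrable on compact intervals, its products with continuous functions are
   integrable, and every iterated integral is continuous in its upper limit. *)

lemma A_fun_periodic: "A_fun (2 * of_int m * pi + x) = A_fun x"
proof -
  have "sin ((2 * of_int m * pi + x) / 2) = cos (pi * of_int m) * sin (x / 2)"
    by (simp add: add_divide_distrib sin_add mult.commute)
  then show ?thesis by (simp add: A_fun_def abs_mult)
qed

lemma minus_ln_le_powr:
  fixes s a :: real
  assumes "0 < s" "0 < a"
  shows "- ln s \<le> s powr (- a) / a"
proof -
  have "ln (s powr (- a)) \<le> s powr (- a) - 1"
    using assms by (intro ln_le_minus_one) simp
  then show ?thesis using assms by (simp add: ln_powr field_simps)
qed

lemma five_sixths_le_sin:
  fixes x :: real
  assumes "0 \<le> x" "x \<le> 1"
  shows "5/6 * x \<le> sin x"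
proof -
  have "\<bar>sin x - (\<Sum>m<3. sin_coeff m * x ^ m)\<bar> \<le> inverse (fact 3) * \<bar>x\<bar> ^ 3"
    by (rule Maclaurin_sin_bound)
  then have "\<bar>sin x - x\<bar> \<le> x ^ 3 / 6"
    using assms by (simp add: numeral_3_eq_3 sin_coeff_def fact_numeral)
  moreover have "x ^ 3 \<le> x"
    using power_decreasing[of 1 3 x] assms by simp
  ultimately show ?thesis by linarith
qed

lemma abs_sin_half_eq:
  fixes x :: real
  assumes "\<bar>x\<bar> \<le> 2 * pi"
  shows "\<bar>sin (x / 2)\<bar> = sin (\<bar>x\<bar> / 2)"
  using assms sin_ge_zero[of "x / 2"] sin_ge_zero[of "- x / 2"] by (cases "0 \<le> x") auto

lemma abs_A_fun_le_two_minus_ln: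
  assumes "x \<noteq> 0" "\<bar>x\<bar> \<le> 1"
  shows "\<bar>A_fun x\<bar> \<le> 2 - ln \<bar>x\<bar>"
proof -
  define s where "s = \<bar>x\<bar>"
  have s: "0 < s" "s \<le> 1" using assms by (auto simp: s_def)
  have "\<bar>2 * sin (x / 2)\<bar> = 2 * sin (s / 2)"
    using abs_sin_half_eq[of x] assms pi_gt3 by (simp add: s_def abs_mult)
  moreover have "5/12 * s \<le> 2 * sin (s / 2)"
    using five_sixths_le_sin[of "s / 2"] s by simp
  moreover have "\<bar>2 * sin (x / 2)\<bar> \<le> s"
    using abs_sin_x_le_abs_x[of "x / 2"] by (simp add: s_def)
  ultimately have "ln (5/12 * s) \<le> A_fun x" "A_fun x \<le> 0"
    using s unfolding A_fun_def by auto
  moreover have "ln (12/5 :: real) \<le> 2"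
    using ln_le_minus_one[of "12/5 :: real"] by simp
  ultimately show ?thesis
    using s by (simp add: ln_mult ln_div s_def)
qed

lemma abs_A_fun_power_le:
  assumes "\<bar>x\<bar> \<le> 1"
  shows "\<bar>A_fun x\<bar> ^ p \<le> (2 + 2 * real p) ^ p * (1 + \<bar>x\<bar> powr (-1/2))"
proof (cases "x = 0 \<or> p = 0")
  case True
  \<comment> \<open>\<open>A_fun 0 = 0\<close>, since \<open>ln 0 = 0\<close> in HOL\<close>
  have "1 * 1 \<le> (2 + 2 * real p) ^ p * (1 + \<bar>x\<bar> powr (-1/2))"
    by (intro mult_mono) auto
  then show ?thesis using True by (auto simp: A_fun_def power_0_left)
next
  case False
  define a where "a = 1 / (2 * real p)"
  have a: "0 < a" using False by (simp add: a_def)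
  have "1 \<le> \<bar>x\<bar> powr (- a)"
    using assms False a by (simp add: powr_minus_divide powr_le1)
  then have "\<bar>A_fun x\<bar> \<le> (2 + 2 * real p) * \<bar>x\<bar> powr (- a)"
    using abs_A_fun_le_two_minus_ln[of x] minus_ln_le_powr[of "\<bar>x\<bar>" a] assms False
    by (simp add: a_def algebra_simps)
  then have "\<bar>A_fun x\<bar> ^ p \<le> ((2 + 2 * real p) * \<bar>x\<bar> powr (- a)) ^ p"
    by (intro power_mono) auto
  also have "\<dots> = (2 + 2 * real p) ^ p * \<bar>x\<bar> powr (-1/2)"
    using False by (simp add: a_def power_mult_distrib powr_power)
  also have "\<dots> \<le> (2 + 2 * real p) ^ p * (1 + \<bar>x\<bar> powr (-1/2))"
    by simp
  finally show ?thesis .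
qed

lemma A_fun_measurable [measurable]: "A_fun \<in> borel_measurable (lebesgue_on S)"
  unfolding A_fun_def by (intro measurable_restrict_space1 measurable_completion) measurable

lemma abs_powr_neg_half_integrable:
  fixes x :: real
  shows "(\<lambda>t. \<bar>t - x\<bar> powr (-1/2)) integrable_on {x-1..x+1}"
proof -
  define f where "f = (\<lambda>t::real. \<bar>t\<bar> powr (-1/2))"
  have right: "f integrable_on {0..1}"
  proof (rule integrable_eq)
    show "(\<lambda>t. t powr (-1/2)) integrable_on {0..1::real}"
      by (rule integrable_on_powr_from_0) auto
  qed (simp add: f_def)
  then have "(\<lambda>t. f (- t)) integrable_on {-1..-0}"
    by (simp only: Henstock_Kurzweil_Integration.integrable_reflect_real)
  then have left: "f integrable_on {-1..0}"
    by (simp add: f_def)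
  have "f integrable_on {-1..1}"
    by (rule Henstock_Kurzweil_Integration.integrable_combine[OF _ _ left right]) auto
  from integrable_shift_real_ivl[OF this, of "- x"] show ?thesis
    by (simp add: f_def add.commute)
qed

lemma abs_A_fun_power_integrable_near_zero:
  assumes "sin (x / 2) = 0"
  shows "(\<lambda>\<theta>. \<bar>A_fun \<theta>\<bar> ^ p) integrable_on {x-1..x+1}"
proof (rule measurable_bounded_by_integrable_imp_integrable)
  define K where "K = (2 + 2 * real p) ^ p"
  obtain i where i: "x = 2 * of_int i * pi"
    using assms by (auto simp: sin_zero_iff_int2 field_simps)
  show "(\<lambda>t. K * (1 + \<bar>t - x\<bar> powr (-1/2))) integrable_on {x-1..x+1}"
    by (intro integrable_on_mult_right integrable_add integrable_const_ivl abs_powr_neg_half_integrable)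
  fix t assume "t \<in> {x-1..x+1}"
  then have "\<bar>t - x\<bar> \<le> 1" by auto
  moreover have "A_fun t = A_fun (t - x)"
    using A_fun_periodic[of i "t - x"] by (simp add: i)
  ultimately show "norm (\<bar>A_fun t\<bar> ^ p) \<le> K * (1 + \<bar>t - x\<bar> powr (-1/2))"
    using abs_A_fun_power_le[of "t - x" p] by (simp add: K_def)
qed auto

lemma abs_A_fun_power_integrable: "(\<lambda>\<theta>. \<bar>A_fun \<theta>\<bar> ^ p) integrable_on {a..b}"
  unfolding cbox_interval[symmetric]
proof (rule integrable_on_little_subintervals, intro ballI)
  fix x :: real
  show "\<exists>d>0. \<forall>u v. x \<in> cbox u v \<and> cbox u v \<subseteq> ball x d \<and> cbox u v \<subseteq> cbox a b \<longrightarrow>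
    (\<lambda>\<theta>. \<bar>A_fun \<theta>\<bar> ^ p) integrable_on cbox u v"
  proof (cases "sin (x / 2) = 0")
    case True
    have "(\<lambda>\<theta>. \<bar>A_fun \<theta>\<bar> ^ p) integrable_on cbox u v"
      if "cbox u v \<subseteq> ball x 1" for u v
      using abs_A_fun_power_integrable_near_zero[OF True]
      by (rule integrable_on_subcbox) (use that in \<open>auto simp: subset_iff dist_real_def\<close>)
    then show ?thesis by (intro exI[of _ 1]) auto
  next
    case False
    have "continuous (at x) (\<lambda>\<theta>. sin (\<theta> / 2))" by (intro continuous_intros) auto
    from continuous_at_avoid[OF this False] obtain d where d: "d > 0"
      "\<And>y. dist x y < d \<Longrightarrow> sin (y / 2) \<noteq> 0" by blast
    have "(\<lambda>\<theta>. \<bar>A_fun \<theta>\<bar> ^ p) integrable_on cbox u v"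
      if "cbox u v \<subseteq> ball x d" for u v
    proof (rule integrable_continuous)
      show "continuous_on (cbox u v) (\<lambda>\<theta>. \<bar>A_fun \<theta>\<bar> ^ p)"
        unfolding A_fun_def using that d(2) by (intro continuous_intros) auto
    qed
    then show ?thesis using d(1) by blast
  qed
qed

lemma A_fun_power_absolutely_integrable:
  "(\<lambda>\<theta>. A_fun \<theta> ^ p) absolutely_integrable_on {a..b}"
  by (rule measurable_bounded_by_integrable_imp_absolutely_integrable[OF _ _ abs_A_fun_power_integrable])
    (auto simp: power_abs)

lemma continuous_times_A_fun_power_integrable:
  assumes "continuous_on {a..b} G"
  shows "(\<lambda>\<theta>. G \<theta> * A_fun \<theta> ^ p) integrable_on {a..b}"
proof -
  have "bounded (G ` {a..b})"
    using assms by (intro compact_imp_bounded compact_continuous_image) auto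
  moreover have "G \<in> borel_measurable (lebesgue_on {a..b})"
    using assms by (intro continuous_imp_measurable_on_sets_lebesgue) auto
  ultimately have "(\<lambda>\<theta>. G \<theta> * A_fun \<theta> ^ p) absolutely_integrable_on {a..b}"
    by (intro absolutely_integrable_bounded_measurable_product_real A_fun_power_absolutely_integrable) auto
  then show ?thesis
    using set_lebesgue_integral_eq_integral(1) by blast
qed

lemma power_times_A_fun_power_integrable:
  assumes "continuous_on UNIV F"
  shows "(\<lambda>\<theta>. \<theta> ^ l * A_fun \<theta> ^ p * F \<theta>) integrable_on {a..b}"
proof -
  have "continuous_on {a..b} (\<lambda>\<theta>. \<theta> ^ l * F \<theta>)"
    using continuous_on_subset[OF assms] by (intro continuous_intros) auto
  from continuous_times_A_fun_power_integrable[OF this, of p] show ?thesis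
    by (simp add: mult_ac)
qed

lemma oint_eq_integral_diff:
  assumes "\<And>c d. g integrable_on {c..d}" "a \<le> \<rho>" "a \<le> t"
  shows "oint \<rho> t g = integral {a..t} g - integral {a..\<rho>} g"
proof (cases "\<rho> \<le> t")
  case True
  then have "integral {a..\<rho>} g + integral {\<rho>..t} g = integral {a..t} g"
    using assms by (intro Henstock_Kurzweil_Integration.integral_combine) auto
  then show ?thesis using True by (simp add: oint_def)
next
  case False
  then have "integral {a..t} g + integral {t..\<rho>} g = integral {a..\<rho>} g"
    using assms by (intro Henstock_Kurzweil_Integration.integral_combine) auto
  then show ?thesis using False by (simp add: oint_def)
qed

lemma oint_continuous:
  assumes "\<And>c d. g integrable_on {c..d}"
  shows "continuous_on UNIV (\<lambda>t. oint \<rho> t g)"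
proof -
  have "continuous (at t) (\<lambda>t. oint \<rho> t g)" for t
  proof -
    define a where "a = min \<rho> t - 1"
    have "a \<le> \<rho>" by (simp add: a_def)
    have "continuous_on {a..t+1} (\<lambda>s. integral {a..s} g - integral {a..\<rho>} g)"
      by (intro continuous_intros indefinite_integral_continuous_1 assms)
    then have "continuous_on {a..t+1} (\<lambda>s. oint \<rho> s g)"
      by (rule continuous_on_eq) (use \<open>a \<le> \<rho>\<close> in \<open>simp add: oint_eq_integral_diff[OF assms]\<close>)
    moreover have "t \<in> interior {a..t+1}"
      by (simp add: a_def)
    ultimately show ?thesis
      by (rule continuous_on_interior)
  qed
  then show ?thesis
    by (simp add: continuous_on_eq_continuous_at)
qed

lemma oint_shift: "oint (c + a) (c + b) f = oint a b (\<lambda>x. f (c + x))"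
  using integral_shift_real_ivl[of "c + a" c "c + b" f] integral_shift_real_ivl[of "c + b" c "c + a" f]
  by (simp add: oint_def add.commute)

lemma oint_sum_mult:
  assumes "finite I" "\<And>i c d. i \<in> I \<Longrightarrow> g i integrable_on {c..d}"
  shows "oint a b (\<lambda>x. \<Sum>i\<in>I. w i * g i x) = (\<Sum>i\<in>I. w i * oint a b (g i))"
  using assms by (simp add: oint_def integral_sum integrable_on_mult_right sum_negf)

lemma Ls_iter_continuous: "continuous_on UNIV (Ls_iter \<rho> ps)"
proof (induction ps)
  case (Cons q ps)
  then show ?case
    by (cases q) (auto intro: oint_continuous power_times_A_fun_power_integrable)
qed simp

lemma bounded_lists_snoc:
  "{js. list_all2 (\<le>) js (ls @ [l])} =
    (\<lambda>(js, j). js @ [j]) ` ({js. list_all2 (\<le>) js ls} \<times> {..l})"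
  by (fastforce simp: list_all2_append2 list_all2_Cons2 image_iff list_all2_lengthD)

lemma finite_bounded_lists: "finite {js. list_all2 (\<le>) js (ls :: nat list)}"
  by (induction ls rule: rev_induct) (simp_all add: bounded_lists_snoc)

lemma oint_shift_expand:
  fixes F :: "'a \<Rightarrow> real \<Rightarrow> real"
  assumes periodic: "\<And>x. A_fun (c + x) = A_fun x"
    and "finite I" and "\<And>i. i \<in> I \<Longrightarrow> continuous_on UNIV (F i)"
    and G: "\<And>\<phi>. G (c + \<phi>) = (\<Sum>i\<in>I. w i * F i \<phi>)"
  shows "oint (c + \<rho>) (c + t) (\<lambda>\<theta>. \<theta> ^ l * A_fun \<theta> ^ p * G \<theta>) =
    (\<Sum>(i, j) \<in> I \<times> {..l}. w i * real (l choose j) * c ^ j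
        * oint \<rho> t (\<lambda>\<phi>. \<phi> ^ (l - j) * A_fun \<phi> ^ p * F i \<phi>))"
proof -
  have expand: "(c + \<phi>) ^ l * A_fun \<phi> ^ p * G (c + \<phi>) =
      (\<Sum>(i, j) \<in> I \<times> {..l}. (w i * real (l choose j) * c ^ j) * (\<phi> ^ (l - j) * A_fun \<phi> ^ p * F i \<phi>))"
    for \<phi>
  proof -
    have "(c + \<phi>) ^ l * A_fun \<phi> ^ p * G (c + \<phi>) =
        (\<Sum>i\<in>I. w i * F i \<phi>) * (\<Sum>j\<le>l. real (l choose j) * c ^ j * \<phi> ^ (l - j)) * A_fun \<phi> ^ p"
      by (simp add: G binomial_ring)
    also have "\<dots> = (\<Sum>i\<in>I. \<Sum>j\<le>l. w i * F i \<phi> * (real (l choose j) * c ^ j * \<phi> ^ (l - j)) * A_fun \<phi> ^ p)"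
      by (simp add: sum_distrib_left sum_distrib_right) (rule sum.swap)
    finally show ?thesis
      unfolding sum.cartesian_product by (simp add: mult_ac)
  qed
  have "oint (c + \<rho>) (c + t) (\<lambda>\<theta>. \<theta> ^ l * A_fun \<theta> ^ p * G \<theta>) =
      oint \<rho> t (\<lambda>\<phi>. (c + \<phi>) ^ l * A_fun \<phi> ^ p * G (c + \<phi>))"
    by (simp add: oint_shift periodic)
  also have "\<dots> = (\<Sum>(i, j) \<in> I \<times> {..l}. w i * real (l choose j) * c ^ j
        * oint \<rho> t (\<lambda>\<phi>. \<phi> ^ (l - j) * A_fun \<phi> ^ p * F i \<phi>))"
    unfolding expand split_def
    by (rule oint_sum_mult) (use assms(2,3) in \<open>auto intro: power_times_A_fun_power_integrable\<close>)
  finally show ?thesis .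
qed

lemma Ls_iter_shift_by_period:
  assumes periodic: "\<And>x. A_fun (c + x) = A_fun x"
    and "length ks = length ls"
  shows "Ls_iter (c + \<rho>) (rev (zip ks ls)) (c + t) =
    (\<Sum>js | list_all2 (\<le>) js ls. c ^ sum_list js * real (\<Prod>u<length ls. ls ! u choose js ! u)
        * Ls_iter \<rho> (rev (zip (map2 (-) ks js) (map2 (-) ls js))) t)"
  using assms(2)
proof (induction ks ls arbitrary: t rule: rev_induct2)
  case 1
  have "{js. list_all2 (\<le>) js []} = {[]}" by auto
  then show ?case by simp
next
  case (4 k ks l ls)
  define J where "J = {js. list_all2 (\<le>) js ls}"
  define W where "W js = c ^ sum_list js * real (\<Prod>u<length ls. ls ! u choose js ! u)" for js
  define Q where "Q js = rev (zip (map2 (-) ks js) (map2 (-) ls js))" for js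
  define summand where "summand js = c ^ sum_list js
    * real (\<Prod>u<length (ls @ [l]). (ls @ [l]) ! u choose js ! u)
    * Ls_iter \<rho> (rev (zip (map2 (-) (ks @ [k]) js) (map2 (-) (ls @ [l]) js))) t" for js
  have "Ls_iter (c + \<rho>) (rev (zip (ks @ [k]) (ls @ [l]))) (c + t) =
      (\<Sum>(js, j) \<in> J \<times> {..l}. W js * real (l choose j) * c ^ j
        * oint \<rho> t (\<lambda>\<phi>. \<phi> ^ (l - j) * A_fun \<phi> ^ (k - 1 - l) * Ls_iter \<rho> (Q js) \<phi>))"
    using 4 by (simp add: J_def W_def Q_def oint_shift_expand[OF periodic] finite_bounded_lists
        Ls_iter_continuous)
  also have "\<dots> = (\<Sum>(js, j) \<in> J \<times> {..l}. summand (js @ [j]))"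
  proof (intro sum.cong refl, clarify)
    fix js j assume "js \<in> J" "j \<le> l"
    then have "length js = length ls" "k - j - 1 - (l - j) = k - 1 - l"
      by (auto simp: J_def list_all2_lengthD)
    with 4(2) show "W js * real (l choose j) * c ^ j
        * oint \<rho> t (\<lambda>\<phi>. \<phi> ^ (l - j) * A_fun \<phi> ^ (k - 1 - l) * Ls_iter \<rho> (Q js) \<phi>) = summand (js @ [j])"
      by (simp add: summand_def W_def Q_def nth_append power_add mult_ac)
  qed
  also have "\<dots> = (\<Sum>js | list_all2 (\<le>) js (ls @ [l]). summand js)"
    by (simp add: bounded_lists_snoc J_def sum.reindex inj_on_def split_def)
  finally show ?case
    by (simp add: summand_def)
qed auto

theorem lemma4:
  fixes m :: int and \<sigma> :: real and ks ls :: "nat list" and n :: nat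
  assumes "length ks = n" and "length ls = n"
    and "\<forall>u<n. 1 \<le> ks ! u"
    and "\<forall>u<n. ls ! u + 1 \<le> ks ! u"
  shows "Ls2 ks ls (2 * of_int m * pi) (2 * of_int m * pi + \<sigma>) =
    (\<Sum>js \<in> {js. length js = n \<and> (\<forall>u<n. js ! u \<le> ls ! u)}.
        (2 * of_int m * pi) ^ sum_list js
        * real (\<Prod>u<n. (ls ! u) choose (js ! u))
        * Ls1 (map2 (-) ks js) (map2 (-) ls js) \<sigma>)"
proof -
  define c where "c = 2 * of_int m * pi"
  have index_set: "{js. length js = n \<and> (\<forall>u<n. js ! u \<le> ls ! u)} = {js. list_all2 (\<le>) js ls}"
    using assms(2) by (auto simp: list_all2_conv_all_nth)
  have "Ls_iter (c + 0) (rev (zip ks ls)) (c + \<sigma>) =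
    (\<Sum>js | list_all2 (\<le>) js ls. c ^ sum_list js * real (\<Prod>u<n. ls ! u choose js ! u)
        * Ls_iter 0 (rev (zip (map2 (-) ks js) (map2 (-) ls js))) \<sigma>)"
    using Ls_iter_shift_by_period[of c ks ls 0 \<sigma>] A_fun_periodic assms(1,2) by (simp add: c_def)
  moreover have "Ls1 (map2 (-) ks js) (map2 (-) ls js) \<sigma> =
      (-1) ^ n * Ls_iter 0 (rev (zip (map2 (-) ks js) (map2 (-) ls js))) \<sigma>"
    if "list_all2 (\<le>) js ls" for js
    using that assms(1,2) by (simp add: Ls1_def Ls2_def list_all2_lengthD)
  ultimately show ?thesis
    unfolding index_set c_def[symmetric] by (simp add: Ls2_def assms(1) sum_distrib_left mult_ac)
qed

end
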